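(* Let $k\ge1$ and let $\Gamma\subset\mathbb{R}_+^k$ be a nonempty compact set. Let $\mu_n=(q_n,s_n,b_n)$, $n=1,2,\dots$, and $\mu=(q,s,b)$ be mechanisms in $\mathcal{M}_\Gamma$. If every $\mu_n$ is monotonic, $b_n$ converges pointwise to $b$ on $\mathbb{R}^k$, and $\mu$ is seller favorable, then $\mu$ is monotonic.
   Context: A $\Gamma$-mechanism consists of $q:\mathbb{R}_+^k\to\Gamma$ and $s:\mathbb{R}_+^k\to\mathbb{R}$; it is IC if $q(x)\cdot x-s(x)\ge q(y)\cdot x-s(y)$ for all $x,y\in\mathbb{R}_+^k$, IR if $q(x)\cdot x-s(x)\ge0$ for all $x\in\mathbb{R}_+^k$, and NPT if $s(x)\ge0$ for all $x\in\mathbb{R}_+^k$. $\mathcal{M}_\Gamma$ is the set of IC, IR and NPT $\Gamma$-mechanisms. The buyer payoff function is $b:\mathbb{R}^k\to\mathbb{R}$, $b(x):=\sup_{z\in\mathbb{R}_+^k}[q(z)\cdot x-s(z)]$; a mechanism is written $\mu=(q,s,b)$. For convex $f$, $f'(x;y):=\lim_{\delta\to0^+}(f(x+\delta y)-f(x))/\delta$. $\mu\in\mathcal{M}_\Gamma$ is seller favorable if $s(x)=b'(x;x)-b(x)$ for all $x\in\mathbb{R}_+^k$. A mechanism is monotonic if $s(y)\ge s(x)$ whenever $y\ge x$ (coordinatewise) in $\mathbb{R}_+^k$. *)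

theory Defs
  imports "HOL-Analysis.Analysis"
begin

text \<open>The nonnegative orthant R_+^k, with k the (finite, nonempty) index type 'k.\<close>
definition nonneg_orthant :: "(real^'k) set" where
  "nonneg_orthant = {x. \<forall>i. 0 \<le> x $ i}"

text \<open>A Gamma-mechanism (q, s) that is IC, IR and NPT (membership in M_Gamma).
  Only the values of q, s on R_+^k are relevant.\<close>
definition in_M :: "(real^'k) set \<Rightarrow> (real^'k \<Rightarrow> real^'k) \<Rightarrow> (real^'k \<Rightarrow> real) \<Rightarrow> bool" where
  "in_M \<Gamma> q s \<longleftrightarrow>
     (\<forall>x\<in>nonneg_orthant. q x \<in> \<Gamma>) \<and>
     (\<forall>x\<in>nonneg_orthant. \<forall>y\<in>nonneg_orthant. q x \<bullet> x - s x \<ge> q y \<bullet> x - s y) \<and>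
     (\<forall>x\<in>nonneg_orthant. q x \<bullet> x - s x \<ge> 0) \<and>
     (\<forall>x\<in>nonneg_orthant. s x \<ge> 0)"

definition buyer_payoff :: "(real^'k \<Rightarrow> real^'k) \<Rightarrow> (real^'k \<Rightarrow> real) \<Rightarrow> real^'k \<Rightarrow> real" where
  "buyer_payoff q s x = (SUP z\<in>nonneg_orthant. q z \<bullet> x - s z)"

definition dir_deriv :: "(real^'k \<Rightarrow> real) \<Rightarrow> real^'k \<Rightarrow> real^'k \<Rightarrow> real" where
  "dir_deriv f x y = Lim (at_right 0) (\<lambda>\<delta>. (f (x + \<delta> *\<^sub>R y) - f x) / \<delta>)"

definition seller_favorable :: "(real^'k \<Rightarrow> real^'k) \<Rightarrow> (real^'k \<Rightarrow> real) \<Rightarrow> bool" where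
  "seller_favorable q s \<longleftrightarrow>
     (\<forall>x\<in>nonneg_orthant. s x = dir_deriv (buyer_payoff q s) x x - buyer_payoff q s x)"

definition monotonic_mech :: "(real^'k \<Rightarrow> real) \<Rightarrow> bool" where
  "monotonic_mech s \<longleftrightarrow>
     (\<forall>x\<in>nonneg_orthant. \<forall>y\<in>nonneg_orthant. (\<forall>i. x $ i \<le> y $ i) \<longrightarrow> s x \<le> s y)"

end

theory Submission
  imports Defs
begin

(* Along a ray t \<mapsto> t u the buyer payoff b of an incentive compatible mechanism is
   convex with subgradient q(t u) \<bullet> u, and the payment is s(t u) = t (q(t u) \<bullet> u) - b(t u).
   Hence s((1+e) u) lies between (1+e) times a left and a right difference quotient of b
   along the ray.  For x \<le> y, monotonicity of s_n at (1+e) x \<le> (1+e) y compares these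
   bounds for b_n; the comparison survives the pointwise limit, and letting e and then
   the right step tend to 0 gives b'(x;x) - b(x) \<le> b'(y;y) - b(y), which for a seller
   favorable mechanism is s x \<le> s y. *)

lemma convex_on_right_slope_tendsto:
  fixes f :: "real \<Rightarrow> real"
  assumes f: "convex_on {l..} f" and "l < a"
  shows "((\<lambda>d. (f (a + d) - f a) / d) \<longlongrightarrow> Inf ((\<lambda>d. (f (a + d) - f a) / d) ` {0<..})) (at_right 0)"
proof -
  have slope_swap: "(f x - f y) / (x - y) = (f y - f x) / (y - x)" for x y
    by (metis minus_diff_eq divide_minus_left divide_minus_right)
  have "((\<lambda>d. (f (a + d) - f a) / d) \<longlongrightarrow> Inf ((\<lambda>d. (f (a + d) - f a) / d) ` ({0<..} \<inter> {0<..})))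
          (at 0 within {0<..} \<inter> {0<..})"
  proof (rule Lim_right_bound)
    fix d1 d2 :: real assume "0 < d1" "d1 \<le> d2"
    then show "(f (a + d1) - f a) / d1 \<le> (f (a + d2) - f a) / d2"
      using convex_on_slope_le(1)[OF f, of a "a + d2" "a + d1",
          unfolded slope_swap[of a "a + d1"] slope_swap[of a "a + d2"]] \<open>l < a\<close>
      by (cases "d1 = d2") simp_all
  next
    fix d :: real assume "0 < d"
    then show "(f a - f l) / (a - l) \<le> (f (a + d) - f a) / d"
      using convex_on_slope_le[OF f, of l "a + d" a,
          unfolded slope_swap[of l a] slope_swap[of l "a + d"] slope_swap[of a "a + d"]] \<open>l < a\<close>
      by simp
  qed
  then show ?thesis by simp
qed

lemma convex_on_tendsto_at_right_shift:
  fixes f :: "real \<Rightarrow> real"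
  assumes f: "convex_on {l..} f" and "l < a"
  shows "((\<lambda>d. f (a + d)) \<longlongrightarrow> f a) (at_right 0)"
proof -
  have "convex_on {l<..} f"
    using f by (rule convex_on_subset) auto
  then have "continuous_on {l<..} f"
    by (intro convex_on_continuous) auto
  then have "(f \<longlongrightarrow> f a) (at a)"
    using \<open>l < a\<close> by (simp add: continuous_on_eq_continuous_at isContD)
  then show ?thesis
    by (intro tendsto_mono[OF at_le LIM_offset_zero]) auto
qed

lemma Lim_right_slope_minus_value_le:
  fixes \<phi> \<psi> :: "real \<Rightarrow> real"
  assumes \<phi>: "convex_on {0..} \<phi>" and \<psi>: "convex_on {0..} \<psi>"
    and gap: "\<And>e h. 0 < e \<Longrightarrow> e < h \<Longrightarrow>
      (1 + e) * ((\<phi> (1 + e) - \<phi> 1) / e) - \<phi> (1 + e)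
        \<le> (1 + e) * ((\<psi> (1 + h) - \<psi> (1 + e)) / (h - e)) - \<psi> (1 + e)"
  shows "Lim (at_right 0) (\<lambda>d. (\<phi> (1 + d) - \<phi> 1) / d) - \<phi> 1
           \<le> Lim (at_right 0) (\<lambda>d. (\<psi> (1 + d) - \<psi> 1) / d) - \<psi> 1"
proof -
  obtain D\<phi> where D\<phi>: "((\<lambda>d. (\<phi> (1 + d) - \<phi> 1) / d) \<longlongrightarrow> D\<phi>) (at_right 0)"
    using convex_on_right_slope_tendsto[OF \<phi>, of 1] by simp
  obtain D\<psi> where D\<psi>: "((\<lambda>d. (\<psi> (1 + d) - \<psi> 1) / d) \<longlongrightarrow> D\<psi>) (at_right 0)"
    using convex_on_right_slope_tendsto[OF \<psi>, of 1] by simp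
  have \<phi>1: "((\<lambda>d. \<phi> (1 + d)) \<longlongrightarrow> \<phi> 1) (at_right 0)"
    and \<psi>1: "((\<lambda>d. \<psi> (1 + d)) \<longlongrightarrow> \<psi> 1) (at_right 0)"
    using convex_on_tendsto_at_right_shift[OF \<phi>, of 1] convex_on_tendsto_at_right_shift[OF \<psi>, of 1]
    by simp_all
  have shift: "((\<lambda>e. c + e) \<longlongrightarrow> c) (at_right 0)" "((\<lambda>e. c - e) \<longlongrightarrow> c) (at_right 0)" for c :: real
    using tendsto_add[OF tendsto_const tendsto_ident_at, of c 0]
      tendsto_diff[OF tendsto_const tendsto_ident_at, of c 0]
    by simp_all
  have slope_bound: "D\<phi> - \<phi> 1 \<le> (\<psi> (1 + h) - \<psi> 1) / h - \<psi> 1" if "0 < h" for h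
  proof (rule tendsto_le[of "at_right 0"])
    show "((\<lambda>e. (1 + e) * ((\<phi> (1 + e) - \<phi> 1) / e) - \<phi> (1 + e)) \<longlongrightarrow> D\<phi> - \<phi> 1) (at_right 0)"
      using tendsto_diff[OF tendsto_mult[OF shift(1)[of 1] D\<phi>] \<phi>1] by simp
    show "((\<lambda>e. (1 + e) * ((\<psi> (1 + h) - \<psi> (1 + e)) / (h - e)) - \<psi> (1 + e))
            \<longlongrightarrow> (\<psi> (1 + h) - \<psi> 1) / h - \<psi> 1) (at_right 0)"
      using tendsto_diff[OF tendsto_mult[OF shift(1)[of 1]
          tendsto_divide[OF tendsto_diff[OF tendsto_const \<psi>1] shift(2)[of h]]] \<psi>1] \<open>0 < h\<close>
      by simp
    show "\<forall>\<^sub>F e in at_right 0. (1 + e) * ((\<phi> (1 + e) - \<phi> 1) / e) - \<phi> (1 + e)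
            \<le> (1 + e) * ((\<psi> (1 + h) - \<psi> (1 + e)) / (h - e)) - \<psi> (1 + e)"
      unfolding eventually_at_right_field using \<open>0 < h\<close> gap by (intro exI[of _ h]) auto
  qed simp
  have "D\<phi> - \<phi> 1 \<le> D\<psi> - \<psi> 1"
    by (rule tendsto_le[of "at_right 0", OF _ tendsto_diff[OF D\<psi> tendsto_const] tendsto_const])
      (auto intro: eventually_mono[OF eventually_at_right_less] slope_bound)
  then show ?thesis
    using tendsto_Lim[OF _ D\<phi>] tendsto_Lim[OF _ D\<psi>] by simp
qed

definition incentive_compatible :: "(real^'k \<Rightarrow> real^'k) \<Rightarrow> (real^'k \<Rightarrow> real) \<Rightarrow> bool" where
  "incentive_compatible q s \<longleftrightarrow>
     (\<forall>x\<in>nonneg_orthant. \<forall>y\<in>nonneg_orthant. q y \<bullet> x - s y \<le> q x \<bullet> x - s x)"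

lemma in_M_imp_incentive_compatible: "in_M \<Gamma> q s \<Longrightarrow> incentive_compatible q s"
  unfolding in_M_def incentive_compatible_def by auto

lemma scaleR_mem_nonneg_orthant: "u \<in> nonneg_orthant \<Longrightarrow> 0 \<le> t \<Longrightarrow> t *\<^sub>R u \<in> nonneg_orthant"
  by (simp add: nonneg_orthant_def)

lemma buyer_payoff_eq:
  assumes "incentive_compatible q s" and "u \<in> nonneg_orthant"
  shows "buyer_payoff q s u = q u \<bullet> u - s u"
  unfolding buyer_payoff_def
  by (rule cSup_eq_maximum) (use assms in \<open>auto simp: incentive_compatible_def\<close>)

lemma buyer_payoff_subgradient:
  assumes ic: "incentive_compatible q s" and u: "u \<in> nonneg_orthant" and v: "v \<in> nonneg_orthant"
  shows "buyer_payoff q s u + q u \<bullet> (v - u) \<le> buyer_payoff q s v"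
  using buyer_payoff_eq[OF ic u] buyer_payoff_eq[OF ic v] ic u v
  by (auto simp: incentive_compatible_def inner_diff_right)

lemma buyer_payoff_ray_subgradient:
  assumes ic: "incentive_compatible q s" and u: "u \<in> nonneg_orthant" and "0 \<le> r" "0 \<le> t"
  shows "buyer_payoff q s (t *\<^sub>R u) + (r - t) * (q (t *\<^sub>R u) \<bullet> u) \<le> buyer_payoff q s (r *\<^sub>R u)"
  using buyer_payoff_subgradient[OF ic, of "t *\<^sub>R u" "r *\<^sub>R u"] u assms
  by (simp add: scaleR_mem_nonneg_orthant flip: scaleR_diff_left)

lemma convex_on_buyer_payoff_ray:
  assumes "incentive_compatible q s" and "u \<in> nonneg_orthant"
  shows "convex_on {0..} (\<lambda>t. buyer_payoff q s (t *\<^sub>R u))"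
proof (rule pos_convex_function[where f'="\<lambda>t. q (t *\<^sub>R u) \<bullet> u"])
  fix r t :: real assume "r \<in> {0..}" "t \<in> {0..}"
  then show "q (r *\<^sub>R u) \<bullet> u * (t - r) \<le> buyer_payoff q s (t *\<^sub>R u) - buyer_payoff q s (r *\<^sub>R u)"
    using buyer_payoff_ray_subgradient[OF assms, of t r] by (simp add: mult.commute)
qed simp

lemma payment_ge_left_slope:
  assumes ic: "incentive_compatible q s" and u: "u \<in> nonneg_orthant" and "0 \<le> r" "r < t"
  shows "t * ((buyer_payoff q s (t *\<^sub>R u) - buyer_payoff q s (r *\<^sub>R u)) / (t - r))
           - buyer_payoff q s (t *\<^sub>R u) \<le> s (t *\<^sub>R u)"
proof -
  have "(buyer_payoff q s (t *\<^sub>R u) - buyer_payoff q s (r *\<^sub>R u)) / (t - r) \<le> q (t *\<^sub>R u) \<bullet> u"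
    using buyer_payoff_ray_subgradient[OF ic u] assms by (simp add: divide_le_eq algebra_simps)
  then show ?thesis
    using buyer_payoff_eq[OF ic scaleR_mem_nonneg_orthant[OF u]] assms
    by (auto dest: mult_left_mono[of _ _ t])
qed

lemma payment_le_right_slope:
  assumes ic: "incentive_compatible q s" and u: "u \<in> nonneg_orthant" and "0 \<le> t" "t < r"
  shows "s (t *\<^sub>R u) \<le> t * ((buyer_payoff q s (r *\<^sub>R u) - buyer_payoff q s (t *\<^sub>R u)) / (r - t))
           - buyer_payoff q s (t *\<^sub>R u)"
proof -
  have "q (t *\<^sub>R u) \<bullet> u \<le> (buyer_payoff q s (r *\<^sub>R u) - buyer_payoff q s (t *\<^sub>R u)) / (r - t)"
    using buyer_payoff_ray_subgradient[OF ic u] assms by (simp add: le_divide_eq algebra_simps)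
  then show ?thesis
    using buyer_payoff_eq[OF ic scaleR_mem_nonneg_orthant[OF u]] assms
    by (auto dest: mult_left_mono[of _ _ t])
qed

definition payment_lower_bound :: "(real^'k \<Rightarrow> real) \<Rightarrow> real^'k \<Rightarrow> real \<Rightarrow> real" where
  "payment_lower_bound b u e = (1 + e) * ((b ((1 + e) *\<^sub>R u) - b u) / e) - b ((1 + e) *\<^sub>R u)"

definition payment_upper_bound :: "(real^'k \<Rightarrow> real) \<Rightarrow> real^'k \<Rightarrow> real \<Rightarrow> real \<Rightarrow> real" where
  "payment_upper_bound b u e h =
     (1 + e) * ((b ((1 + h) *\<^sub>R u) - b ((1 + e) *\<^sub>R u)) / (h - e)) - b ((1 + e) *\<^sub>R u)"

lemma payment_bounds_gap:
  fixes q :: "real^'k \<Rightarrow> real^'k" and s :: "real^'k \<Rightarrow> real"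
  defines "b \<equiv> buyer_payoff q s"
  assumes ic: "incentive_compatible q s" and mono: "monotonic_mech s"
    and x: "x \<in> nonneg_orthant" and y: "y \<in> nonneg_orthant" and xy: "\<forall>i. x $ i \<le> y $ i"
    and "0 < e" "e < h"
  shows "payment_lower_bound b x e \<le> payment_upper_bound b y e h"
proof -
  have "payment_lower_bound b x e \<le> s ((1 + e) *\<^sub>R x)"
    using payment_ge_left_slope[OF ic x, of 1 "1 + e"] \<open>0 < e\<close>
    by (simp add: payment_lower_bound_def b_def)
  also have "\<dots> \<le> s ((1 + e) *\<^sub>R y)"
    using mono x y xy \<open>0 < e\<close>
    by (simp add: monotonic_mech_def scaleR_mem_nonneg_orthant mult_left_mono)
  also have "\<dots> \<le> payment_upper_bound b y e h"
    using payment_le_right_slope[OF ic y, of "1 + e" "1 + h"] \<open>0 < e\<close> \<open>e < h\<close>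
    by (simp add: payment_upper_bound_def b_def)
  finally show ?thesis .
qed

lemma payment_bounds_gap_limit:
  assumes ic: "\<And>n. incentive_compatible (qn n) (sn n)" and mono: "\<And>n. monotonic_mech (sn n)"
    and lim: "\<And>u. (\<lambda>n. buyer_payoff (qn n) (sn n) u) \<longlonglongrightarrow> b u"
    and x: "x \<in> nonneg_orthant" and y: "y \<in> nonneg_orthant" and xy: "\<forall>i. x $ i \<le> y $ i"
    and "0 < e" "e < h"
  shows "payment_lower_bound b x e \<le> payment_upper_bound b y e h"
proof (rule tendsto_le[OF sequentially_bot])
  show "(\<lambda>n. payment_upper_bound (buyer_payoff (qn n) (sn n)) y e h)
          \<longlonglongrightarrow> payment_upper_bound b y e h"
    unfolding payment_upper_bound_def using \<open>e < h\<close> by (intro tendsto_intros lim) simp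
  show "(\<lambda>n. payment_lower_bound (buyer_payoff (qn n) (sn n)) x e) \<longlonglongrightarrow> payment_lower_bound b x e"
    unfolding payment_lower_bound_def using \<open>0 < e\<close> by (intro tendsto_intros lim) simp
qed (use payment_bounds_gap[OF ic mono x y xy \<open>0 < e\<close> \<open>e < h\<close>] in simp)

lemma seller_favorable_payment_eq:
  assumes "seller_favorable q s" and "u \<in> nonneg_orthant"
  shows "s u = Lim (at_right 0) (\<lambda>d. (buyer_payoff q s ((1 + d) *\<^sub>R u) - buyer_payoff q s u) / d)
                 - buyer_payoff q s u"
  using assms unfolding seller_favorable_def dir_deriv_def by (simp add: scaleR_add_left)

theorem proposition5:
  fixes \<Gamma> :: "(real^'k) set"
    and qn :: "nat \<Rightarrow> real^'k \<Rightarrow> real^'k" and sn :: "nat \<Rightarrow> real^'k \<Rightarrow> real"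
    and q :: "real^'k \<Rightarrow> real^'k" and s :: "real^'k \<Rightarrow> real"
  assumes "\<Gamma> \<subseteq> nonneg_orthant" and "\<Gamma> \<noteq> {}" and "compact \<Gamma>"
    and "\<And>n. in_M \<Gamma> (qn n) (sn n)"
    and "in_M \<Gamma> q s"
    and "\<And>n. monotonic_mech (sn n)"
    and "\<And>x. (\<lambda>n. buyer_payoff (qn n) (sn n) x) \<longlonglongrightarrow> buyer_payoff q s x"
    and "seller_favorable q s"
  shows "monotonic_mech s"
  unfolding monotonic_mech_def
proof (intro ballI impI)
  fix x y :: "real^'k"
  assume x: "x \<in> nonneg_orthant" and y: "y \<in> nonneg_orthant" and xy: "\<forall>i. x $ i \<le> y $ i"
  have ic_n: "incentive_compatible (qn n) (sn n)" for n
    using assms(4) by (rule in_M_imp_incentive_compatible)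
  have ic: "incentive_compatible q s"
    using assms(5) by (rule in_M_imp_incentive_compatible)
  have "payment_lower_bound (buyer_payoff q s) x e \<le> payment_upper_bound (buyer_payoff q s) y e h"
    if "0 < e" "e < h" for e h
    using payment_bounds_gap_limit[OF ic_n assms(6,7) x y xy that] .
  then show "s x \<le> s y"
    using Lim_right_slope_minus_value_le[where \<phi>="\<lambda>t. buyer_payoff q s (t *\<^sub>R x)"
        and \<psi>="\<lambda>t. buyer_payoff q s (t *\<^sub>R y)"]
      convex_on_buyer_payoff_ray[OF ic] x y
    by (simp add: seller_favorable_payment_eq[OF assms(8)]
        payment_lower_bound_def payment_upper_bound_def)
qed

end
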